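(* Let $k\ge 2$ be an integer. For every positive integer $n$, deterministically (for every realization), the random $k$-tree $G(n)$ has clustering coefficient at least $1/2$.
   Context: Random $k$-tree process: $G(0)$ is a clique on $k$ vertices; for $t\ge1$, $G(t)$ is obtained from $G(t-1)$ by choosing a $k$-clique of $G(t-1)$ uniformly at random, creating a new vertex, and joining it to all vertices of the chosen clique. The clustering coefficient of a graph $G$ is $cc(G)=\frac{1}{|V(G)|}\sum_{u\in V(G)}\frac{|\langle N(u)\rangle|}{\binom{\deg(u)}{2}}$, where $|\langle N(u)\rangle|$ is the number of edges $xy$ with both $x,y$ neighbors of $u$. *)

theory Defs
  imports Complex_Main
begin

text \<open>Simple graphs on natural-number vertices: a vertex set V and an edge set E
  of 2-element subsets of V.\<close>

definition is_clique :: "nat set set \<Rightarrow> nat set \<Rightarrow> bool" where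
  "is_clique E C \<longleftrightarrow> (\<forall>x\<in>C. \<forall>y\<in>C. x \<noteq> y \<longrightarrow> {x, y} \<in> E)"

text \<open>ktree k t V E: (V,E) is a possible realization of G(t) in the random k-tree process.\<close>

inductive ktree :: "nat \<Rightarrow> nat \<Rightarrow> nat set \<Rightarrow> nat set set \<Rightarrow> bool" for k :: nat where
  base: "ktree k 0 {0..<k} {e. e \<subseteq> {0..<k} \<and> card e = 2}"
| step: "\<lbrakk> ktree k t V E; C \<subseteq> V; card C = k; is_clique E C; v \<notin> V \<rbrakk>
         \<Longrightarrow> ktree k (Suc t) (insert v V) (E \<union> {{v, c} | c. c \<in> C})"

definition nbhd :: "nat set set \<Rightarrow> nat \<Rightarrow> nat set" where
  "nbhd E u = {w. {u, w} \<in> E}"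

definition clustering_coeff :: "nat set \<Rightarrow> nat set set \<Rightarrow> real" where
  "clustering_coeff V E =
     (1 / real (card V)) *
     (\<Sum>u\<in>V. real (card {e \<in> E. e \<subseteq> nbhd E u}) / real (card (nbhd E u) choose 2))"

end

theory Submission
  imports Defs
begin

text \<open>By induction along the process, every vertex u of G(n) whose neighbourhood has d vertices
  spans exactly (k-1)(2d-k)/2 edges in its neighbourhood, and the degrees sum to k(k-1)+2kn.
  For n \<ge> 1 every degree is at least k, and then (k-1)(2d-k)/(d(d-1)) \<ge> 1/2 + (2k-d)/(4k).
  Averaged over the k+n vertices, the correction terms (2k-d)/(4k) sum to (k+1)/4 > 0.\<close>

abbreviation degree :: "nat set set \<Rightarrow> nat \<Rightarrow> nat" where
  "degree E u \<equiv> card (nbhd E u)"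

abbreviation nbhd_edges :: "nat set set \<Rightarrow> nat \<Rightarrow> nat set set" where
  "nbhd_edges E u \<equiv> {e \<in> E. e \<subseteq> nbhd E u}"

abbreviation spokes :: "nat \<Rightarrow> nat set \<Rightarrow> nat set set" where
  "spokes v C \<equiv> {{v, c} | c. c \<in> C}"

lemma two_times_choose_two: "2 * (n choose 2) = n * (n - 1)"
proof -
  have "even (n * (n - 1))" by (cases "even n") auto
  then show ?thesis by (simp only: choose_two dvd_mult_div_cancel)
qed

lemma card_two_subsets:
  "finite A \<Longrightarrow> 2 * card {B. B \<subseteq> A \<and> card B = 2} = card A * (card A - 1)"
  by (simp add: n_subsets two_times_choose_two)

lemma card_spokes: "card (spokes v A) = card A"
proof -
  have "inj_on (\<lambda>c. {v, c}) A" by (auto simp: inj_on_def doubleton_eq_iff)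
  then show ?thesis by (simp add: Setcompr_eq_image card_image)
qed

lemma nbhd_subset:
  assumes "\<forall>e\<in>E. e \<subseteq> V \<and> card e = 2"
  shows "nbhd E u \<subseteq> V - {u}"
  using assms unfolding nbhd_def by force

lemma nbhd_complete:
  assumes "u \<in> A"
  shows "nbhd {e. e \<subseteq> A \<and> card e = 2} u = A - {u}"
  using assms unfolding nbhd_def by (auto simp: card_2_iff)

lemma nbhd_add_vertex:
  assumes "\<forall>e\<in>E. e \<subseteq> V" "v \<notin> V" "C \<subseteq> V"
  shows "nbhd (E \<union> spokes v C) w =
    (if w = v then C else if w \<in> C then insert v (nbhd E w) else nbhd E w)"
  using assms unfolding nbhd_def by (auto simp: doubleton_eq_iff)

lemma degree_add_vertex:
  assumes "\<forall>e\<in>E. e \<subseteq> V" "finite V" "v \<notin> V" "C \<subseteq> V"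
  shows "degree (E \<union> spokes v C) w =
    (if w = v then card C else if w \<in> C then Suc (degree E w) else degree E w)"
proof -
  have "nbhd E w \<subseteq> V" using assms(1) unfolding nbhd_def by blast
  then have "finite (nbhd E w)" "v \<notin> nbhd E w" using assms(2,3) finite_subset by blast+
  then show ?thesis using nbhd_add_vertex[OF assms(1,3,4)] by simp
qed

lemma nbhd_edges_add_vertex:
  assumes E: "\<forall>e\<in>E. e \<subseteq> V \<and> card e = 2" and v: "v \<notin> V" and C: "C \<subseteq> V"
    and clique: "is_clique E C"
  shows "nbhd_edges (E \<union> spokes v C) w =
    (if w = v then {e. e \<subseteq> C \<and> card e = 2}
     else if w \<in> C then nbhd_edges E w \<union> spokes v (C - {w}) else nbhd_edges E w)"
proof -
  have nbhd: "nbhd (E \<union> spokes v C) w =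
      (if w = v then C else if w \<in> C then insert v (nbhd E w) else nbhd E w)"
    using nbhd_add_vertex[of E V v C w] E v C by blast
  have v_notin_edge: "v \<notin> e" if "e \<in> E" for e using E v that by blast
  have v_notin_nbhd: "v \<notin> nbhd E w" using nbhd_subset[OF E] v by blast
  consider "w = v" | "w \<noteq> v" "w \<in> C" | "w \<noteq> v" "w \<notin> C" by blast
  then show ?thesis
  proof cases
    case 1
    have "{e \<in> E. e \<subseteq> C} = {e. e \<subseteq> C \<and> card e = 2}"
      using E clique unfolding is_clique_def by (auto simp: card_2_iff)
    moreover have "\<not> {v, c} \<subseteq> C" for c using v C by blast
    ultimately show ?thesis using 1 nbhd by auto
  next
    case 2
    have "C - {w} \<subseteq> nbhd E w" using clique 2(2) unfolding is_clique_def nbhd_def by auto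
    moreover have "w \<notin> nbhd E w" using nbhd_subset[OF E] by blast
    moreover have "v \<notin> C" using v C by blast
    ultimately have spoke_iff: "{v, c} \<subseteq> insert v (nbhd E w) \<longleftrightarrow> c \<in> C - {w}"
      if "c \<in> C" for c
      using that by blast
    have "nbhd_edges (E \<union> spokes v C) w = {e \<in> E \<union> spokes v C. e \<subseteq> insert v (nbhd E w)}"
      using 2 nbhd by simp
    also have "\<dots> = {e \<in> E. e \<subseteq> insert v (nbhd E w)} \<union> {e \<in> spokes v C. e \<subseteq> insert v (nbhd E w)}"
      by blast
    also have "{e \<in> E. e \<subseteq> insert v (nbhd E w)} = nbhd_edges E w"
      using v_notin_edge by blast
    also have "{e \<in> spokes v C. e \<subseteq> insert v (nbhd E w)} = spokes v (C - {w})"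
      using spoke_iff by blast
    finally show ?thesis using 2 by simp
  next
    case 3
    have "\<not> {v, c} \<subseteq> nbhd E w" for c using v_notin_nbhd by blast
    then show ?thesis using 3 nbhd by auto
  qed
qed

lemma card_nbhd_edges_add_vertex:
  assumes E: "\<forall>e\<in>E. e \<subseteq> V \<and> card e = 2" and V: "finite V" and v: "v \<notin> V" and C: "C \<subseteq> V"
    and clique: "is_clique E C" and w: "w \<in> C"
  shows "card (nbhd_edges (E \<union> spokes v C) w) = card (nbhd_edges E w) + (card C - 1)"
proof -
  have "E \<subseteq> Pow V" using E by blast
  then have "finite (nbhd_edges E w)" using V by (simp add: finite_subset)
  moreover have "finite (spokes v (C - {w}))"
    using finite_subset[OF C V] by (simp add: Setcompr_eq_image)
  moreover have "nbhd_edges E w \<inter> spokes v (C - {w}) = {}" using E v by auto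
  ultimately have "card (nbhd_edges E w \<union> spokes v (C - {w}))
      = card (nbhd_edges E w) + card (spokes v (C - {w}))"
    by (rule card_Un_disjoint)
  moreover have "w \<noteq> v" using v C w by blast
  ultimately show ?thesis
    using nbhd_edges_add_vertex[OF E v C clique, of w] card_spokes[of v "C - {w}"]
      finite_subset[OF C V] w by simp
qed

lemma ktree_finite_card:
  assumes "ktree k t V E"
  shows "finite V \<and> card V = k + t"
  using assms by (induction rule: ktree.induct) auto

lemma ktree_edges:
  assumes "ktree k t V E"
  shows "\<forall>e\<in>E. e \<subseteq> V \<and> card e = 2"
  using assms by (induction rule: ktree.induct) (fastforce simp: card_2_iff)+

lemma ktree_degree_sum:
  assumes "ktree k t V E"
  shows "(\<Sum>u\<in>V. degree E u) = k * (k - 1) + 2 * k * t"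
  using assms
proof (induction rule: ktree.induct)
  case base
  then show ?case using nbhd_complete[of _ "{0..<k}"] by simp
next
  case (step t V E C v)
  have E: "\<forall>e\<in>E. e \<subseteq> V" and V: "finite V"
    using ktree_edges[OF step.hyps(1)] ktree_finite_card[OF step.hyps(1)] by auto
  note degree = degree_add_vertex[OF E V step.hyps(5,2)]
  have "(\<Sum>u\<in>insert v V. degree (E \<union> spokes v C) u)
      = card C + (\<Sum>u\<in>V. degree E u + (if u \<in> C then 1 else 0))"
    using V step.hyps(5) by (auto simp: degree intro!: sum.cong)
  also have "\<dots> = card C + (\<Sum>u\<in>V. degree E u) + card C"
    using V step.hyps(2) by (simp add: sum.distrib sum.If_cases Int_absorb1)
  finally show ?case using step.IH step.hyps(3) by simp
qed

lemma ktree_degree_ge_pred: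
  assumes "ktree k t V E" "u \<in> V"
  shows "k \<le> Suc (degree E u)"
  using assms
proof (induction arbitrary: u rule: ktree.induct)
  case base
  then show ?case using nbhd_complete[of u "{0..<k}"] by simp
next
  case (step t V E C v)
  have E: "\<forall>e\<in>E. e \<subseteq> V" and V: "finite V"
    using ktree_edges[OF step.hyps(1)] ktree_finite_card[OF step.hyps(1)] by auto
  note degree = degree_add_vertex[OF E V step.hyps(5,2)]
  show ?case
  proof (cases "u = v")
    case False
    then have "k \<le> Suc (degree E u)" using step.IH step.prems by simp
    then show ?thesis using degree False by simp
  qed (simp add: degree step.hyps(3))
qed

lemma ktree_degree_ge:
  assumes "ktree k t V E" "0 < t" "u \<in> V"
  shows "k \<le> degree E u"
  using assms
proof (induction arbitrary: u rule: ktree.induct)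
  case base
  then show ?case by simp
next
  case (step t V E C v)
  have E: "\<forall>e\<in>E. e \<subseteq> V" and V: "finite V" and card_V: "card V = k + t"
    using ktree_edges[OF step.hyps(1)] ktree_finite_card[OF step.hyps(1)] by auto
  note degree = degree_add_vertex[OF E V step.hyps(5,2)]
  consider "u = v" | "u \<in> C" | "u \<in> V - C" using step.prems(2) by blast
  then show ?case
  proof cases
    case 3
    \<comment> \<open>in G(0) the k-clique C is the whole vertex set\<close>
    have "t \<noteq> 0"
      using card_subset_eq[OF V step.hyps(2)] step.hyps(3) card_V 3 by auto
    then show ?thesis using step.IH[of u] degree 3 step.hyps(5) by auto
  qed (use degree step.hyps ktree_degree_ge_pred in auto)
qed

lemma ktree_nbhd_edges:
  assumes "ktree k t V E" "2 \<le> k" "u \<in> V"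
  shows "2 * card (nbhd_edges E u) = (k - 1) * (2 * degree E u - k)"
  using assms
proof (induction arbitrary: u rule: ktree.induct)
  case base
  let ?A = "{0..<k} - {u}"
  have "nbhd_edges {e. e \<subseteq> {0..<k} \<and> card e = 2} u = {e. e \<subseteq> ?A \<and> card e = 2}"
    using nbhd_complete[OF base.prems(2)] by auto
  then have "2 * card (nbhd_edges {e. e \<subseteq> {0..<k} \<and> card e = 2} u) = (k - 1) * (k - 2)"
    using card_two_subsets[of ?A] base.prems by simp
  then show ?case using nbhd_complete[OF base.prems(2)] base.prems by (simp add: numeral_2_eq_2)
next
  case (step t V E C v)
  have E: "\<forall>e\<in>E. e \<subseteq> V \<and> card e = 2" and V: "finite V"
    using ktree_edges[OF step.hyps(1)] ktree_finite_card[OF step.hyps(1)] by auto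
  note degree = degree_add_vertex[of E V v C] E V step.hyps(5,2)
  note edges = nbhd_edges_add_vertex[OF E step.hyps(5,2,4)]
  consider "u = v" | "u \<in> C" | "u \<in> V - C" using step.prems(2) by blast
  then show ?case
  proof cases
    case 1
    then show ?thesis
      using edges degree card_two_subsets[of C] finite_subset[OF step.hyps(2) V] step.hyps(3)
      by (simp add: mult.commute)
  next
    case 2
    have u: "u \<noteq> v" "u \<in> V" using 2 step.hyps(2,5) by auto
    have "2 * card (nbhd_edges (E \<union> spokes v C) u)
        = (k - 1) * (2 * degree E u - k) + 2 * (k - 1)"
      using card_nbhd_edges_add_vertex[OF E V step.hyps(5,2,4) 2] step.IH[OF step.prems(1) u(2)]
        step.hyps(3) by simp
    also have "\<dots> = (k - 1) * (2 * degree E u - k + 2)" by (simp add: algebra_simps)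
    also have "2 * degree E u - k + 2 = 2 * degree (E \<union> spokes v C) u - k"
      using degree u 2 ktree_degree_ge_pred[OF step.hyps(1) u(2)] step.prems(1) by simp
    finally show ?thesis .
  next
    case 3
    then show ?thesis using edges degree step.IH step.prems(1) step.hyps(5) by auto
  qed
qed

lemma ktree_degree_excess_sum:
  assumes "ktree k t V E" "1 \<le> k"
  shows "(\<Sum>u\<in>V. (2 * real k - real (degree E u)) / (4 * real k)) = (real k + 1) / 4"
proof -
  have "real (\<Sum>u\<in>V. degree E u) = real (k * (k - 1) + 2 * k * t)"
    using ktree_degree_sum[OF assms(1)] by simp
  then have degrees: "(\<Sum>u\<in>V. real (degree E u)) = real k * (real k - 1) + 2 * real k * real t"
    using assms(2) by (simp add: of_nat_diff)
  have "(\<Sum>u\<in>V. (2 * real k - real (degree E u)) / (4 * real k))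
      = (2 * real k * real (card V) - (\<Sum>u\<in>V. real (degree E u))) / (4 * real k)"
    by (simp add: sum_divide_distrib[symmetric] sum_subtractf)
  also have "\<dots> = (real k + 1) / 4"
    using ktree_finite_card[OF assms(1)] assms(2) unfolding degrees
    by (simp add: field_simps power2_eq_square)
  finally show ?thesis .
qed

text \<open>Multiplied by 4KD(D-1), the difference of the two sides is (D-2K)^2(D-1) + 4K(K-2)(D-K).\<close>

lemma clustering_ratio_bound:
  fixes K D :: real
  assumes "2 \<le> K" "K \<le> D"
  shows "1/2 + (2*K - D)/(4*K) \<le> ((K-1)*(2*D-K)/2) / (D*(D-1)/2)"
proof -
  define Q where "Q = D*(D-1)"
  have pos: "0 < Q" "0 < K" using assms unfolding Q_def by auto
  have "0 \<le> (D-2*K)^2*(D-1) + 4*K*(K-2)*(D-K)" using assms by simp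
  also have "\<dots> = 4*K*(K-1)*(2*D-K) - 2*K*Q - (2*K-D)*Q"
    unfolding Q_def by (simp add: algebra_simps power2_eq_square)
  finally have "2*K*Q + (2*K-D)*Q \<le> 4*K*(K-1)*(2*D-K)" by simp
  then have "(2*K*Q + (2*K-D)*Q) / (4*K*Q) \<le> (4*K*(K-1)*(2*D-K)) / (4*K*Q)"
    using pos by (intro divide_right_mono) auto
  moreover have "1/2 + (2*K - D)/(4*K) = (2*K*Q + (2*K-D)*Q) / (4*K*Q)"
    using pos by (simp add: field_simps)
  moreover have "(4*K*(K-1)*(2*D-K)) / (4*K*Q) = ((K-1)*(2*D-K)/2) / (Q/2)"
    using pos by (simp add: field_simps)
  ultimately show ?thesis unfolding Q_def by simp
qed

lemma local_clustering_bound: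
  assumes "2 \<le> k" "k \<le> d" "2 * c = (k - 1) * (2 * d - k)"
  shows "1/2 + (2 * real k - real d) / (4 * real k) \<le> real c / real (d choose 2)"
proof -
  have "real (2 * c) = real ((k - 1) * (2 * d - k))" using assms(3) by simp
  then have c: "real c = (real k - 1) * (2 * real d - real k) / 2"
    using assms(1,2) by (simp add: of_nat_diff)
  have "real (2 * (d choose 2)) = real (d * (d - 1))" by (simp only: two_times_choose_two)
  then have d: "real (d choose 2) = real d * (real d - 1) / 2"
    using assms(1,2) by (simp add: of_nat_diff)
  show ?thesis unfolding c d using assms(1,2) by (intro clustering_ratio_bound) auto
qed

theorem proposition4:
  fixes k n :: nat and V :: "nat set" and E :: "nat set set"
  assumes "k \<ge> 2" and "n \<ge> 1" and "ktree k n V E"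
  shows "clustering_coeff V E \<ge> 1 / 2"
proof -
  let ?local = "\<lambda>u. real (card (nbhd_edges E u)) / real (degree E u choose 2)"
  let ?excess = "\<lambda>u. (2 * real k - real (degree E u)) / (4 * real k)"
  have card_V: "card V = k + n" using ktree_finite_card[OF assms(3)] by simp
  have "1/2 + ?excess u \<le> ?local u" if "u \<in> V" for u
    using assms that ktree_nbhd_edges ktree_degree_ge by (intro local_clustering_bound) auto
  then have "(\<Sum>u\<in>V. 1/2 + ?excess u) \<le> (\<Sum>u\<in>V. ?local u)" by (rule sum_mono)
  then have "real (card V) / 2 + (real k + 1) / 4 \<le> (\<Sum>u\<in>V. ?local u)"
    using ktree_degree_excess_sum[OF assms(3)] assms(1) by (simp add: sum.distrib)
  moreover have "0 < real (card V)" using card_V assms(1) by simp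
  ultimately show ?thesis unfolding clustering_coeff_def by (simp add: field_simps)
qed

end
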